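(* Let $X=\{x_1,\overline{x_1},x_2,\overline{x_2},\dots\}$ and let $F(X)$ be the free involutive monoid on $X$. There is an isomorphism of categories \[E\colon \coprod_{m\ge0}\bigl(\mathcal{IF}(m)\times_{H_m}X^m\bigr)\to T(F(X))\] induced from the evaluation functors $\mathcal{IF}(m)\times X^m\to T(F(X))$ given on objects by $(f,y_1,\dots,y_m)\mapsto \mathsf H_{F(X)}(f)(y_1,\dots,y_m)$.
   Context: An involutive monoid is a monoid with an involutive anti-automorphism $m\mapsto\overline m$; $F(X)$ is the free such monoid in which the involution of $x_i$ is $\overline{x_i}$ (its elements are words in $X$). Let $C_2=\{1,t\}$. The category $\Delta H_+$: objects $[n]=\{0,\dots,n\}$ for $n\ge -1$ ($[-1]=\emptyset$); a morphism $f:[n]\to[m]$ is a map of sets with a total order on each fibre and a $C_2$-label on each element of $[n]$; the composite $g\circ f$ has fibre over $i$ equal to the concatenation, in the order of $g^{-1}(i)$, of the fibres $f^{-1}(j)$, each replaced by $f^{-1}(j)^t$ (order reversed, labels multiplied by $t$) when $j$ has label $t$ in $g$. The automorphism group of $[m-1]$ is the hyperoctahedral group $H_m=C_2^m\rtimes\Sigma_m$. For an involutive monoid $M$, $f:[p-1]\to[q-1]$ and $\mathbf m\in M^p$, $\mathsf H_M(f)(\mathbf m)=(b_0,\dots,b_{q-1})$ with $b_i$ the product in the order of $f^{-1}(i)$ of $m_x$ (label $1$) or $\overline{m_x}$ (label $t$), empty product $1$. The tuple category $T(M)$ has objects all finite (possibly empty) tuples in $M$ and, for each $f\in\mathrm{Hom}_{\Delta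 H_+}([p-1],[q-1])$ and $\mathbf m\in M^p$, a morphism $(f,\mathbf m):\mathbf m\to\mathsf H_M(f)(\mathbf m)$, with composition induced from $\Delta H_+$. $\mathcal{IF}(m)$ is the under-category $[m-1]\downarrow\Delta H_+$ (objects: morphisms $f$ out of $[m-1]$; morphisms $f\to g\circ f$ given by $g$), with right $H_m$-action $f\bullet h=f\circ h$. $X^m$ is regarded as a discrete category with left $H_m$-action $h\cdot\mathbf y=\mathsf H_{F(X)}(h)(\mathbf y)$ (applying the involution to the labelled coordinates and permuting). $\mathcal{IF}(m)\times_{H_m}X^m$ is the quotient of the product category by $(f\circ h,\mathbf y)\sim(f,h\cdot\mathbf y)$. The evaluation functor sends a morphism $g:f\to g\circ f$ at $\mathbf y$ to the morphism $(g,\mathsf H_{F(X)}(f)(\mathbf y))$ of $T(F(X))$. *)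

theory Defs
  imports Main
begin

record ('o, 'a) cat =
  Obj :: "'o set"
  Mor :: "'a set"
  Dom :: "'a \<Rightarrow> 'o"
  Cod :: "'a \<Rightarrow> 'o"
  Idm :: "'o \<Rightarrow> 'a"
  Comp :: "'a \<Rightarrow> 'a \<Rightarrow> 'a"   (* Comp g f = g o f, defined when Cod f = Dom g *)

definition cat_iso :: "('o, 'a) cat \<Rightarrow> ('p, 'b) cat \<Rightarrow> ('o \<Rightarrow> 'p) \<Rightarrow> ('a \<Rightarrow> 'b) \<Rightarrow> bool" where
  "cat_iso C D Fo Fm \<longleftrightarrow>
     bij_betw Fo (Obj C) (Obj D) \<and> bij_betw Fm (Mor C) (Mor D) \<and>
     (\<forall>a\<in>Mor C. Fo (Dom C a) = Dom D (Fm a) \<and> Fo (Cod C a) = Cod D (Fm a)) \<and>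
     (\<forall>x\<in>Obj C. Fm (Idm C x) = Idm D (Fo x)) \<and>
     (\<forall>a\<in>Mor C. \<forall>b\<in>Mor C. Cod C a = Dom C b \<longrightarrow> Fm (Comp C b a) = Comp D (Fm b) (Fm a))"

text \<open>The object [n] (n \<ge> -1) is represented by its cardinality n+1 :: nat.
  A morphism [p-1] \<rightarrow> [q-1] is represented by the list (of length q) of its fibres,
  each fibre being the list, in its total order, of its elements together with their
  C_2-label (False = 1, True = t).\<close>

type_synonym dhmor = "(nat \<times> bool) list list"

definition dhom :: "nat \<Rightarrow> nat \<Rightarrow> dhmor set" where
  "dhom p q = {f. length f = q \<and> distinct (map fst (concat f)) \<and> set (map fst (concat f)) = {0..<p}}"

definition dh_id :: "nat \<Rightarrow> dhmor" where
  "dh_id m = map (\<lambda>i. [(i, False)]) [0..<m]"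

text \<open>F^t: order reversed, labels multiplied by t.\<close>
definition fibre_t :: "(nat \<times> bool) list \<Rightarrow> (nat \<times> bool) list" where
  "fibre_t F = rev (map (\<lambda>(x, l). (x, \<not> l)) F)"

definition dh_comp :: "dhmor \<Rightarrow> dhmor \<Rightarrow> dhmor" where
  "dh_comp g f = map (\<lambda>G. concat (map (\<lambda>(j, l). if l then fibre_t (f ! j) else f ! j) G)) g"

definition dh_aut :: "nat \<Rightarrow> dhmor set" where
  "dh_aut m = {h \<in> dhom m m. \<exists>h'\<in>dhom m m. dh_comp h' h = dh_id m \<and> dh_comp h h' = dh_id m}"

text \<open>Letters: (i, False) is x_i, (i, True) is its involute. Words are lists of letters,
  the product is concatenation, the unit is the empty word.\<close>
type_synonym letter = "nat \<times> bool"
type_synonym word = "letter list"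

definition winv :: "word \<Rightarrow> word" where
  "winv w = rev (map (\<lambda>(i, b). (i, \<not> b)) w)"

definition HF :: "dhmor \<Rightarrow> word list \<Rightarrow> word list" where
  "HF f ms = map (\<lambda>F. concat (map (\<lambda>(x, l). if l then winv (ms ! x) else ms ! x) F)) f"

text \<open>X^m, viewed inside F(X)^m (tuples of one-letter words).\<close>
definition Xpow :: "nat \<Rightarrow> word list set" where
  "Xpow m = {ys. length ys = m \<and> (\<forall>w\<in>set ys. length w = 1)}"

definition TF :: "(word list, dhmor \<times> word list) cat" where
  "TF = \<lparr> Obj = UNIV,
          Mor = {(f, ms). f \<in> dhom (length ms) (length f)},
          Dom = (\<lambda>(f, ms). ms),
          Cod = (\<lambda>(f, ms). HF f ms),
          Idm = (\<lambda>ms. (dh_id (length ms), ms)),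
          Comp = (\<lambda>(g, ms') (f, ms). (dh_comp g f, ms)) \<rparr>"

text \<open>Objects (m, f, y): f : [m-1] \<rightarrow> [q-1], y \<in> X^m.
  Morphisms (m, f, g, y): the morphism g : f \<rightarrow> g o f of IF(m), at y.\<close>

definition IFX_obj :: "(nat \<times> dhmor \<times> word list) set" where
  "IFX_obj = {(m, f, y). f \<in> dhom m (length f) \<and> y \<in> Xpow m}"

definition IFX_mor :: "(nat \<times> dhmor \<times> dhmor \<times> word list) set" where
  "IFX_mor = {(m, f, g, y). f \<in> dhom m (length f) \<and> g \<in> dhom (length f) (length g) \<and> y \<in> Xpow m}"

definition IFX_dom :: "nat \<times> dhmor \<times> dhmor \<times> word list \<Rightarrow> nat \<times> dhmor \<times> word list" where
  "IFX_dom = (\<lambda>(m, f, g, y). (m, f, y))"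

definition IFX_cod :: "nat \<times> dhmor \<times> dhmor \<times> word list \<Rightarrow> nat \<times> dhmor \<times> word list" where
  "IFX_cod = (\<lambda>(m, f, g, y). (m, dh_comp g f, y))"

definition IFX_id :: "nat \<times> dhmor \<times> word list \<Rightarrow> nat \<times> dhmor \<times> dhmor \<times> word list" where
  "IFX_id = (\<lambda>(m, f, y). (m, f, dh_id (length f), y))"

definition IFX_comp :: "nat \<times> dhmor \<times> dhmor \<times> word list \<Rightarrow> nat \<times> dhmor \<times> dhmor \<times> word list
                         \<Rightarrow> nat \<times> dhmor \<times> dhmor \<times> word list" where
  "IFX_comp = (\<lambda>(m', f', k, y') (m, f, g, y). (m, f, dh_comp k g, y))"

definition obj_gen :: "((nat \<times> dhmor \<times> word list) \<times> (nat \<times> dhmor \<times> word list)) set" where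
  "obj_gen = {((m, dh_comp f h, y), (m, f, HF h y)) | m f h y.
               f \<in> dhom m (length f) \<and> h \<in> dh_aut m \<and> y \<in> Xpow m}"

definition mor_gen :: "((nat \<times> dhmor \<times> dhmor \<times> word list) \<times> (nat \<times> dhmor \<times> dhmor \<times> word list)) set" where
  "mor_gen = {((m, dh_comp f h, g, y), (m, f, g, HF h y)) | m f g h y.
               f \<in> dhom m (length f) \<and> g \<in> dhom (length f) (length g) \<and> h \<in> dh_aut m \<and> y \<in> Xpow m}"

definition obj_rel where "obj_rel = (obj_gen \<union> obj_gen\<inverse>)\<^sup>*"
definition mor_rel where "mor_rel = (mor_gen \<union> mor_gen\<inverse>)\<^sup>*"

definition IFX_quot :: "((nat \<times> dhmor \<times> word list) set, (nat \<times> dhmor \<times> dhmor \<times> word list) set) cat" where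
  "IFX_quot = \<lparr> Obj = IFX_obj // obj_rel,
                Mor = IFX_mor // mor_rel,
                Dom = (\<lambda>A. obj_rel `` {IFX_dom (SOME a. a \<in> A)}),
                Cod = (\<lambda>A. obj_rel `` {IFX_cod (SOME a. a \<in> A)}),
                Idm = (\<lambda>X. mor_rel `` {IFX_id (SOME x. x \<in> X)}),
                Comp = (\<lambda>B A. let a = (SOME a. a \<in> A);
                                   b = (SOME b. b \<in> B \<and> IFX_dom b = IFX_cod a)
                               in mor_rel `` {IFX_comp b a}) \<rparr>"

definition eval_obj :: "nat \<times> dhmor \<times> word list \<Rightarrow> word list" where
  "eval_obj = (\<lambda>(m, f, y). HF f y)"

definition eval_mor :: "nat \<times> dhmor \<times> dhmor \<times> word list \<Rightarrow> dhmor \<times> word list" where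
  "eval_mor = (\<lambda>(m, f, g, y). (g, HF f y))"

definition E_obj :: "(nat \<times> dhmor \<times> word list) set \<Rightarrow> word list" where
  "E_obj A = eval_obj (SOME a. a \<in> A)"

definition E_mor :: "(nat \<times> dhmor \<times> dhmor \<times> word list) set \<Rightarrow> dhmor \<times> word list" where
  "E_mor A = eval_mor (SOME a. a \<in> A)"

end

(* Evaluation is invariant under the H_m-action because H_{F(X)} is functorial; composition in
   Delta H_+ is itself an instance of H, acting on tuples of words in the labelled elements.
   Conversely, every f : [m-1] -> [q-1] factors as f = c o sigma, where sigma in H_m lists the
   elements of all fibres in order (with their labels) and c is the unlabelled order-preserving
   map with the same fibre sizes.  Hence (f, y) ~ (c, sigma . y), and as y consists of letters,
   both c and sigma . y can be read off the tuple of words H(f)(y): c from the word lengths,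
   sigma . y from the letters.  So evaluation is a complete invariant of the classes of objects
   and of morphisms, every tuple of words is attained, and the functor laws, which hold on
   representatives, pass to the quotient. *)

theory Submission
  imports Defs "HOL-Library.Multiset"
begin

lemma winv_Nil [simp]: "winv [] = []"
  by (simp add: winv_def)

lemma winv_Cons [simp]: "winv ((x, l) # w) = winv w @ [(x, \<not> l)]"
  by (simp add: winv_def)

lemma winv_winv [simp]: "winv (winv w) = w"
  by (induct w) (auto simp: winv_def)

lemma winv_append [simp]: "winv (v @ w) = winv w @ winv v"
  by (simp add: winv_def)

lemma length_winv [simp]: "length (winv w) = length w"
  by (simp add: winv_def)

lemma map_fst_winv [simp]: "map fst (winv w) = rev (map fst w)"
  by (simp add: winv_def rev_map comp_def case_prod_beta)

lemma length_HF [simp]: "length (HF f ms) = length f"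
  by (simp add: HF_def)

(* A morphism of Delta H_+ is a tuple of words in the labelled elements, and composing with g
   is applying H(g) to it. *)
lemma dh_comp_eq_HF: "dh_comp g f = HF g f"
proof -
  have "fibre_t = winv"
    by (simp add: fun_eq_iff fibre_t_def winv_def)
  then show ?thesis
    unfolding dh_comp_def HF_def by (rule arg_cong)
qed

definition labelled_entry :: "word list \<Rightarrow> nat \<times> bool \<Rightarrow> word" where
  "labelled_entry ms = (\<lambda>(x, l). if l then winv (ms ! x) else ms ! x)"

lemma labelled_entry_apply [simp]:
  "labelled_entry ms (x, l) = (if l then winv (ms ! x) else ms ! x)"
  by (simp add: labelled_entry_def)

lemma HF_eq_labelled_entry: "HF f ms = map (\<lambda>F. concat (map (labelled_entry ms) F)) f"
  by (simp add: HF_def labelled_entry_def)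

lemma HF_nth: "i < length f \<Longrightarrow> HF f ms ! i = concat (map (labelled_entry ms) (f ! i))"
  by (simp add: HF_eq_labelled_entry)

lemma labelled_entry_winv:
  "concat (map (labelled_entry ms) (winv F)) = winv (concat (map (labelled_entry ms) F))"
  by (induct F) auto

lemma labelled_entry_HF:
  "j < length f \<Longrightarrow> labelled_entry (HF f ms) (j, l) =
     concat (map (labelled_entry ms) (labelled_entry f (j, l)))"
  by (simp add: labelled_entry_winv HF_eq_labelled_entry)

lemma HF_HF:
  assumes "\<forall>(j, l) \<in> set (concat g). j < length f"
  shows "HF (HF g f) ms = HF g (HF f ms)"
proof -
  have "concat (map (labelled_entry ms) (concat (map (labelled_entry f) G)))
      = concat (map (labelled_entry (HF f ms)) G)" if "\<forall>(j, l) \<in> set G. j < length f" for G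
    using that by (induct G) (auto simp del: labelled_entry_apply simp: labelled_entry_HF)
  with assms show ?thesis
    by (simp add: HF_eq_labelled_entry)
qed

lemma distinct_upt_perm_iff_mset:
  "distinct xs \<and> set xs = {0..<m} \<longleftrightarrow> mset xs = mset [0..<m]"
proof
  assume "distinct xs \<and> set xs = {0..<m}"
  then show "mset xs = mset [0..<m]"
    by (metis distinct_upt set_eq_iff_mset_eq_distinct set_upt)
next
  assume "mset xs = mset [0..<m]"
  then show "distinct xs \<and> set xs = {0..<m}"
    by (metis distinct_upt mset_eq_imp_distinct_iff mset_eq_setD set_upt)
qed

lemma dhom_iff_mset:
  "f \<in> dhom m q \<longleftrightarrow> length f = q \<and> mset (map fst (concat f)) = mset [0..<m]"
  unfolding dhom_def mem_Collect_eq distinct_upt_perm_iff_mset by (rule refl)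

lemma dhom_index_less: "f \<in> dhom m q \<Longrightarrow> (j, l) \<in> set (concat f) \<Longrightarrow> j < m"
  unfolding dhom_def by force

lemma length_concat_dhom:
  assumes "f \<in> dhom m q"
  shows "length (concat f) = m"
proof -
  have "size (mset (map fst (concat f))) = size (mset [0..<m])"
    using assms by (simp only: dhom_iff_mset)
  then show ?thesis
    by simp
qed

lemma mset_fst_labelled_entry:
  "mset (map fst (labelled_entry f (j, l))) = mset (map fst (f ! j))"
  by (cases l) (simp_all del: mset_map)

lemma mset_fst_concat_HF:
  "mset (map fst (concat (HF g f))) = (\<Sum>j \<leftarrow> map fst (concat g). mset (map fst (f ! j)))"
proof -
  have "mset (map fst (concat (map (labelled_entry f) G)))
      = (\<Sum>j \<leftarrow> map fst G. mset (map fst (f ! j)))" for G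
    by (induct G) (auto simp del: mset_map labelled_entry_apply simp: mset_fst_labelled_entry)
  then show ?thesis
    by (induct g) (simp_all add: HF_eq_labelled_entry del: mset_map)
qed

lemma sum_list_map_eq_if_mset_eq:
  fixes h :: "'a \<Rightarrow> 'b::comm_monoid_add"
  assumes "mset xs = mset ys"
  shows "sum_list (map h xs) = sum_list (map h ys)"
proof -
  have "sum_list (map h zs) = sum_mset (image_mset h (mset zs))" for zs
    by (simp only: sum_mset_sum_list flip: mset_map)
  then show ?thesis
    by (simp only: assms)
qed

lemma dh_comp_dhom:
  assumes f: "f \<in> dhom m n" and g: "g \<in> dhom n q"
  shows "dh_comp g f \<in> dhom m q"
proof -
  let ?M = "\<lambda>F. mset (map fst F)"
  have "map (\<lambda>j. ?M (f ! j)) [0..<n] = map ?M f"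
    using f by (auto simp: dhom_iff_mset simp del: mset_map intro: nth_equalityI)
  then have "(\<Sum>j \<leftarrow> [0..<n]. ?M (f ! j)) = (\<Sum>F \<leftarrow> f. ?M F)"
    by (simp only:)
  moreover have "(\<Sum>j \<leftarrow> map fst (concat g). ?M (f ! j)) = (\<Sum>j \<leftarrow> [0..<n]. ?M (f ! j))"
    using g by (intro sum_list_map_eq_if_mset_eq) (simp only: dhom_iff_mset)
  moreover have "(\<Sum>F \<leftarrow> f. ?M F) = ?M (concat f)"
    by (induct f) simp_all
  moreover have "?M (concat f) = mset [0..<m]"
    using f by (simp only: dhom_iff_mset)
  ultimately have "mset (map fst (concat (dh_comp g f))) = mset [0..<m]"
    by (simp only: dh_comp_eq_HF mset_fst_concat_HF)
  with g show ?thesis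
    by (simp only: dhom_iff_mset dh_comp_eq_HF length_HF)
qed

section \<open>The hyperoctahedral groups\<close>

definition singletons :: "'a list \<Rightarrow> 'a list list" where
  "singletons xs = map (\<lambda>x. [x]) xs"

lemma length_singletons [simp]: "length (singletons xs) = length xs"
  by (simp add: singletons_def)

lemma nth_singletons [simp]: "i < length xs \<Longrightarrow> singletons xs ! i = [xs ! i]"
  by (simp add: singletons_def)

lemma concat_singletons [simp]: "concat (singletons xs) = xs"
  by (induct xs) (simp_all add: singletons_def)

lemma labelled_entry_matching_singleton:
  "ms ! x = [(j, l)] \<Longrightarrow> labelled_entry ms (x, l) = [(j, False)]"
  by simp

lemma dh_id_nth: "i < m \<Longrightarrow> dh_id m ! i = [(i, False)]"
  by (simp add: dh_id_def)

lemma length_dh_id [simp]: "length (dh_id m) = m"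
  by (simp add: dh_id_def)

lemma singletons_dh_aut:
  assumes distinct: "distinct (map fst c)" and onto: "set (map fst c) = {0..<length c}"
  shows "singletons c \<in> dh_aut (length c)"
proof -
  define m where "m = length c"
  define \<sigma> where "\<sigma> = (!) (map fst c)"
  define \<tau> where "\<tau> = inv_into {..<m} \<sigma>"
  have \<sigma>: "bij_betw \<sigma> {..<m} {..<m}"
    unfolding \<sigma>_def m_def using bij_betw_nth[OF distinct] onto by (simp add: lessThan_atLeast0)
  then have \<tau>: "bij_betw \<tau> {..<m} {..<m}"
    unfolding \<tau>_def by (rule bij_betw_inv_into)
  have \<sigma>\<tau>: "\<sigma> (\<tau> j) = j" if "j < m" for j
    using that \<sigma> unfolding \<tau>_def by (simp add: bij_betw_inv_into_right)
  have \<tau>\<sigma>: "\<tau> (\<sigma> i) = i" if "i < m" for i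
    using that \<sigma> unfolding \<tau>_def by (simp add: bij_betw_inv_into_left)
  have \<tau>_less: "\<tau> j < m" if "j < m" for j
    using that \<tau> by (auto dest: bij_betw_apply)
  have \<sigma>_less: "\<sigma> i < m" if "i < m" for i
    using that \<sigma> by (auto dest: bij_betw_apply)
  have c_nth: "c ! i = (\<sigma> i, snd (c ! i))" if "i < m" for i
    using that by (simp add: \<sigma>_def m_def)
  define h where "h = singletons c"
  \<comment> \<open>h sends the element of c ! i to i; h' sends i back to it, with the same label\<close>
  define h' where "h' = map (\<lambda>j. [(\<tau> j, snd (c ! \<tau> j))]) [0..<m]"
  have "h \<in> dhom m m"
    using distinct onto unfolding dhom_def mem_Collect_eq h_def m_def concat_singletons by simp
  moreover have "h' \<in> dhom m m"
  proof -
    have "map fst (concat h') = map \<tau> [0..<m]"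
      by (simp add: h'_def map_concat comp_def concat_map_singleton)
    then show ?thesis
      using \<tau> unfolding dhom_def mem_Collect_eq
      by (simp add: h'_def distinct_map bij_betw_def lessThan_atLeast0 comp_def del: set_concat)
  qed
  moreover have "dh_comp h' h = dh_id m"
  proof (rule nth_equalityI)
    fix j assume "j < length (dh_comp h' h)"
    then have j: "j < m" by (simp add: dh_comp_eq_HF h'_def)
    have "h ! \<tau> j = [(j, snd (c ! \<tau> j))]"
      using c_nth[OF \<tau>_less[OF j]] \<sigma>\<tau>[OF j] \<tau>_less[OF j] by (simp add: h_def m_def)
    then show "dh_comp h' h ! j = dh_id m ! j"
      using j by (simp add: dh_comp_eq_HF HF_nth h'_def dh_id_nth labelled_entry_matching_singleton
          del: labelled_entry_apply)
  qed (simp add: dh_comp_eq_HF h'_def)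
  moreover have "dh_comp h h' = dh_id m"
  proof (rule nth_equalityI)
    fix i assume "i < length (dh_comp h h')"
    then have i: "i < m" by (simp add: dh_comp_eq_HF h_def m_def)
    have "h' ! \<sigma> i = [(i, snd (c ! i))]"
      using \<sigma>_less[OF i] \<tau>\<sigma>[OF i] by (simp add: h'_def)
    moreover have "h ! i = [(\<sigma> i, snd (c ! i))]" and "length h = m"
      using i c_nth[OF i] by (simp_all add: h_def m_def)
    ultimately show "dh_comp h h' ! i = dh_id m ! i"
      using i by (simp add: dh_comp_eq_HF HF_nth dh_id_nth labelled_entry_matching_singleton
          del: labelled_entry_apply)
  qed (simp add: dh_comp_eq_HF h_def m_def)
  ultimately show ?thesis
    unfolding dh_aut_def h_def m_def by blast
qed

lemma dh_aut_dhom: "h \<in> dh_aut m \<Longrightarrow> h \<in> dhom m m"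
  by (simp add: dh_aut_def)

lemma length_dh_aut: "h \<in> dh_aut m \<Longrightarrow> length h = m"
  by (simp add: dh_aut_def dhom_def)

lemma length_le_length_concat: "\<forall>xs \<in> set xss. xs \<noteq> [] \<Longrightarrow> length xss \<le> length (concat xss)"
  by (induct xss) (auto simp: Suc_le_eq simp flip: length_greater_0_conv)

lemma length_one_if_length_concat_eq:
  "\<forall>xs \<in> set xss. xs \<noteq> [] \<Longrightarrow> length (concat xss) = length xss \<Longrightarrow> xs \<in> set xss \<Longrightarrow> length xs = 1"
proof (induct xss)
  case (Cons ys xss)
  have "length xss \<le> length (concat xss)"
    using Cons.prems(1) by (simp add: length_le_length_concat)
  moreover have "0 < length ys"
    using Cons.prems(1) by simp
  moreover have "length ys + length (concat xss) = Suc (length xss)"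
    using Cons.prems(2) by simp
  ultimately have "length ys = 1" and "length (concat xss) = length xss"
    by linarith+
  with Cons show ?case
    by auto
qed simp

(* h o h' = id forces every fibre of h to be nonempty, and the m fibres have m elements in all. *)
lemma dh_aut_fibre_length:
  assumes h: "h \<in> dh_aut m" and F: "F \<in> set h"
  shows "length F = 1"
proof -
  obtain h' where h': "dh_comp h h' = dh_id m"
    using h by (auto simp: dh_aut_def)
  have hm: "h \<in> dhom m m"
    using h by (rule dh_aut_dhom)
  have len: "length h = m"
    using h by (rule length_dh_aut)
  have "h ! i \<noteq> []" if i: "i < m" for i
  proof
    assume "h ! i = []"
    then have "dh_comp h h' ! i = []"
      using i len by (simp add: dh_comp_eq_HF HF_nth)
    with h' i show False
      by (simp add: dh_id_nth)
  qed
  then have "\<forall>F \<in> set h. F \<noteq> []"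
    using len by (auto simp: in_set_conv_nth)
  moreover have "length (concat h) = length h"
    using length_concat_dhom[OF hm] len by simp
  ultimately show ?thesis
    using F by (rule length_one_if_length_concat_eq)
qed

lemma length_labelled_entry_Xpow: "y \<in> Xpow m \<Longrightarrow> x < m \<Longrightarrow> length (labelled_entry y (x, l)) = 1"
  by (auto simp: Xpow_def)

lemma HF_dh_aut_Xpow:
  assumes h: "h \<in> dh_aut m" and y: "y \<in> Xpow m"
  shows "HF h y \<in> Xpow m"
proof -
  have "length (concat (map (labelled_entry y) F)) = 1" if F: "F \<in> set h" for F
  proof -
    obtain x l where F_eq: "F = [(x, l)]"
      using dh_aut_fibre_length[OF h F] by (auto simp: length_Suc_conv)
    moreover have "(x, l) \<in> set (concat h)"
      using F F_eq by force
    then have "x < m"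
      by (rule dhom_index_less[OF dh_aut_dhom[OF h]])
    ultimately show ?thesis
      using y by (simp add: length_labelled_entry_Xpow del: labelled_entry_apply)
  qed
  with length_dh_aut[OF h] show ?thesis
    by (auto simp: Xpow_def HF_eq_labelled_entry simp del: labelled_entry_apply)
qed

section \<open>Factorisation through an automorphism\<close>

fun blocks :: "nat \<Rightarrow> nat list \<Rightarrow> dhmor" where
  "blocks s [] = []"
| "blocks s (n # ns) = map (\<lambda>i. (i, False)) [s..<s + n] # blocks (s + n) ns"

lemma length_blocks [simp]: "length (blocks s ns) = length ns"
  by (induct ns arbitrary: s) auto

lemma concat_blocks: "concat (blocks s ns) = map (\<lambda>i. (i, False)) [s..<s + sum_list ns]"
proof (induct ns arbitrary: s)
  case (Cons n ns)
  have "[s..<s + (n + sum_list ns)] = [s..<s + n] @ [s + n..<s + n + sum_list ns]"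
    using upt_add_eq_append[of s "s + n" "sum_list ns"] by (simp add: add.assoc)
  with Cons show ?case
    by simp
qed simp

lemma blocks_dhom: "blocks 0 ns \<in> dhom (sum_list ns) (length ns)"
  unfolding dhom_def mem_Collect_eq concat_blocks by (simp add: comp_def)

lemma HF_blocks_singletons_append:
  "HF (blocks (length p) (map length ws)) (singletons (p @ concat ws @ r)) = ws"
proof (induct ws arbitrary: p)
  case (Cons w ws)
  have "HF (blocks (length (p @ w)) (map length ws)) (singletons ((p @ w) @ concat ws @ r)) = ws"
    by (rule Cons.hyps)
  moreover have "map (\<lambda>i. singletons (p @ w @ concat ws @ r) ! i) [length p..<length p + length w]
      = singletons w"
    by (rule nth_equalityI) (auto simp: nth_append)
  ultimately show ?case
    by (simp add: HF_eq_labelled_entry comp_def)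
qed (simp add: HF_def)

lemma HF_blocks_singletons: "HF (blocks 0 (map length ws)) (singletons (concat ws)) = ws"
  using HF_blocks_singletons_append[of "[]" ws "[]"] by simp

lemma blocks_dhom_fibre_lengths: "f \<in> dhom m q \<Longrightarrow> blocks 0 (map length f) \<in> dhom m (length f)"
  using blocks_dhom[of "map length f"] length_concat_dhom[of f m q] by (simp add: length_concat)

lemma singletons_concat_dh_aut: "f \<in> dhom m q \<Longrightarrow> singletons (concat f) \<in> dh_aut m"
  using singletons_dh_aut[of "concat f"] length_concat_dhom[of f m q] by (simp add: dhom_def)

lemma singletons_concat_if_length_one: "\<forall>w \<in> set ws. length w = 1 \<Longrightarrow> singletons (concat ws) = ws"
  by (induct ws) (auto simp: singletons_def length_Suc_conv)

lemma concat_HF: "concat (HF f ms) = concat (map (labelled_entry ms) (concat f))"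
  by (induct f) (simp_all add: HF_eq_labelled_entry del: labelled_entry_apply)

lemma HF_singletons: "HF (singletons c) ms = map (labelled_entry ms) c"
  by (simp add: HF_eq_labelled_entry singletons_def del: labelled_entry_apply)

lemma length_concat_map_length_one:
  "\<forall>x \<in> set xs. length (h x) = 1 \<Longrightarrow> length (concat (map h xs)) = length xs"
  by (induct xs) auto

context
  fixes f m q y
  assumes f: "f \<in> dhom m q" and y: "y \<in> Xpow m"
begin

lemma length_labelled_entry_fibre:
  assumes "F \<in> set f" and "a \<in> set F"
  shows "length (labelled_entry y a) = 1"
proof (cases a)
  case (Pair x l)
  with assms have "(x, l) \<in> set (concat f)"
    unfolding set_concat by blast
  then have "x < m"
    by (rule dhom_index_less[OF f])
  with y Pair show ?thesis
    by (simp add: length_labelled_entry_Xpow del: labelled_entry_apply)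
qed

lemma map_length_HF: "map length (HF f y) = map length f"
  using length_labelled_entry_fibre
  by (auto simp: HF_eq_labelled_entry intro!: length_concat_map_length_one simp del: labelled_entry_apply)

lemma length_concat_HF: "length (concat (HF f y)) = m"
  using map_length_HF length_concat_dhom[OF f] by (metis length_concat)

lemma singletons_concat_HF: "singletons (concat (HF f y)) = HF (singletons (concat f)) y"
  using length_labelled_entry_fibre
  by (auto simp: concat_HF HF_singletons intro!: singletons_concat_if_length_one simp del: labelled_entry_apply)

end

section \<open>Quotients by a complete invariant\<close>

lemma equiv_rtrancl_Un_converse: "equiv UNIV ((R \<union> R\<inverse>)\<^sup>*)"
  by (auto simp: equiv_def refl_on_def sym_rtrancl sym_Un_converse intro: trans_rtrancl)

lemma rtrancl_Un_converse_invariant: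
  assumes "\<And>a b. (a, b) \<in> R \<Longrightarrow> \<phi> a = \<phi> b" and "(a, b) \<in> (R \<union> R\<inverse>)\<^sup>*"
  shows "\<phi> a = \<phi> b"
  using assms(2) by induct (auto dest: assms(1))

lemma rtrancl_Un_converse_class_subset:
  assumes "R \<subseteq> A \<times> A" and "X \<in> A // (R \<union> R\<inverse>)\<^sup>*"
  shows "X \<subseteq> A"
proof
  fix b assume "b \<in> X"
  with assms(2) obtain a where "a \<in> A" and "(a, b) \<in> (R \<union> R\<inverse>)\<^sup>*"
    by (auto elim: quotientE)
  from this(2,1) show "b \<in> A"
    by (induct rule: rtrancl_induct) (use assms(1) in auto)
qed

locale complete_invariant =
  fixes r :: "'a rel" and A :: "'a set" and \<phi> :: "'a \<Rightarrow> 'b" and \<rho> :: "'b \<Rightarrow> 'a"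
  assumes equiv: "equiv UNIV r"
    and invariant: "(a, b) \<in> r \<Longrightarrow> \<phi> a = \<phi> b"
    and normal_form: "a \<in> A \<Longrightarrow> (a, \<rho> (\<phi> a)) \<in> r"
begin

lemma related_if_same_value:
  assumes "a \<in> A" and "b \<in> A" and "\<phi> a = \<phi> b"
  shows "(a, b) \<in> r"
proof -
  have "(a, \<rho> (\<phi> a)) \<in> r" and "(\<rho> (\<phi> a), b) \<in> r"
    using normal_form[OF assms(1)] normal_form[OF assms(2)] assms(3) equiv
    by (auto simp: equiv_def dest: symD)
  then show ?thesis
    using equiv by (auto simp: equiv_def dest: transD)
qed

lemma in_quotient_UNIV: "X \<in> A // r \<Longrightarrow> X \<in> UNIV // r"
  by (auto simp: quotient_def)

lemma some_in_quotient: "X \<in> A // r \<Longrightarrow> (SOME x. x \<in> X) \<in> X"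
  using in_quotient_imp_non_empty[OF equiv in_quotient_UNIV] by (simp add: some_in_eq)

lemma value_some_class: "\<phi> (SOME x. x \<in> r `` {a}) = \<phi> a"
proof -
  have "(SOME x. x \<in> r `` {a}) \<in> r `` {a}"
    by (rule someI, rule equiv_class_self[OF equiv]) simp
  then show ?thesis
    by (auto dest: invariant)
qed

lemma value_some_in_quotient:
  assumes "X \<in> A // r" and "x \<in> X"
  shows "\<phi> (SOME x. x \<in> X) = \<phi> x"
proof -
  obtain x0 where X: "X = r `` {x0}"
    using assms(1) by (rule quotientE)
  then have "\<phi> (SOME x. x \<in> X) = \<phi> x0"
    by (simp only: value_some_class)
  also have "\<phi> x0 = \<phi> x"
    using assms(2) X by (simp add: invariant)
  finally show ?thesis .
qed

lemma bij_betw_quotient: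
  assumes "\<phi> ` A \<subseteq> B" and "\<And>b. b \<in> B \<Longrightarrow> \<rho> b \<in> A \<and> \<phi> (\<rho> b) = b"
  shows "bij_betw (\<lambda>X. \<phi> (SOME x. x \<in> X)) (A // r) B"
proof (rule bij_betw_imageI)
  show "inj_on (\<lambda>X. \<phi> (SOME x. x \<in> X)) (A // r)"
  proof (rule inj_onI)
    fix X Y assume X: "X \<in> A // r" and Y: "Y \<in> A // r"
      and eq: "\<phi> (SOME x. x \<in> X) = \<phi> (SOME x. x \<in> Y)"
    obtain x y where x: "x \<in> A" "X = r `` {x}" and y: "y \<in> A" "Y = r `` {y}"
      using X Y by (auto elim!: quotientE)
    with eq have "\<phi> x = \<phi> y"
      by (simp only: value_some_class)
    with x y show "X = Y"
      using related_if_same_value equiv_class_eq[OF equiv] by simp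
  qed
  show "(\<lambda>X. \<phi> (SOME x. x \<in> X)) ` (A // r) = B"
  proof
    show "(\<lambda>X. \<phi> (SOME x. x \<in> X)) ` (A // r) \<subseteq> B"
      using assms(1) by (auto elim!: quotientE simp only: value_some_class)
    show "B \<subseteq> (\<lambda>X. \<phi> (SOME x. x \<in> X)) ` (A // r)"
    proof
      fix b assume "b \<in> B"
      then have "r `` {\<rho> b} \<in> A // r" and "\<phi> (SOME x. x \<in> r `` {\<rho> b}) = b"
        using assms(2) by (auto intro: quotientI simp only: value_some_class)
      then show "b \<in> (\<lambda>X. \<phi> (SOME x. x \<in> X)) ` (A // r)"
        by force
    qed
  qed
qed

end

lemma eval_obj_obj_gen: "(a, b) \<in> obj_gen \<Longrightarrow> eval_obj a = eval_obj b"
  unfolding obj_gen_def eval_obj_def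
  by (auto simp: dh_comp_eq_HF length_dh_aut intro!: HF_HF dest: dhom_index_less)

lemma eval_mor_mor_gen: "(a, b) \<in> mor_gen \<Longrightarrow> eval_mor a = eval_mor b"
  unfolding mor_gen_def eval_mor_def
  by (auto simp: dh_comp_eq_HF length_dh_aut intro!: HF_HF dest: dhom_index_less)

(* The representative (c, sigma . y) coming from f = c o sigma: the fibre sizes of c are the word
   lengths of b, and sigma . y is the tuple of letters of b. *)
definition normal_obj :: "word list \<Rightarrow> nat \<times> dhmor \<times> word list" where
  "normal_obj b = (length (concat b), blocks 0 (map length b), singletons (concat b))"

definition normal_mor :: "dhmor \<times> word list \<Rightarrow> nat \<times> dhmor \<times> dhmor \<times> word list" where
  "normal_mor = (\<lambda>(g, b). (length (concat b), blocks 0 (map length b), g, singletons (concat b)))"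

lemma singletons_Xpow: "singletons w \<in> Xpow (length w)"
  by (simp add: Xpow_def singletons_def)

lemma normal_obj_IFX_obj: "normal_obj b \<in> IFX_obj"
  using blocks_dhom[of "map length b"] singletons_Xpow[of "concat b"]
  by (simp add: normal_obj_def IFX_obj_def length_concat)

lemma normal_mor_IFX_mor: "p \<in> Mor TF \<Longrightarrow> normal_mor p \<in> IFX_mor"
  using blocks_dhom[of "map length (snd p)"] singletons_Xpow[of "concat (snd p)"]
  by (auto simp: TF_def normal_mor_def IFX_mor_def length_concat)

lemma eval_normal_obj: "eval_obj (normal_obj b) = b"
  by (simp add: normal_obj_def eval_obj_def HF_blocks_singletons)

lemma eval_normal_mor: "eval_mor (normal_mor p) = p"
  by (cases p) (simp add: normal_mor_def eval_mor_def HF_blocks_singletons)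

lemma eval_mor_Mor_TF: "a \<in> IFX_mor \<Longrightarrow> eval_mor a \<in> Mor TF"
  by (auto simp: IFX_mor_def eval_mor_def TF_def)

lemma normal_obj_HF:
  assumes "f \<in> dhom m q" and "y \<in> Xpow m"
  shows "normal_obj (HF f y) = (m, blocks 0 (map length f), HF (singletons (concat f)) y)"
  using length_concat_HF[OF assms] map_length_HF[OF assms] singletons_concat_HF[OF assms]
  by (simp add: normal_obj_def)

lemma obj_gen_normal_obj:
  assumes "a \<in> IFX_obj"
  shows "(a, normal_obj (eval_obj a)) \<in> obj_gen"
proof -
  obtain m f y where a: "a = (m, f, y)" and f: "f \<in> dhom m (length f)" and y: "y \<in> Xpow m"
    using assms by (auto simp: IFX_obj_def)
  let ?c = "blocks 0 (map length f)" and ?\<sigma> = "singletons (concat f)"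
  have "((m, dh_comp ?c ?\<sigma>, y), (m, ?c, HF ?\<sigma> y)) \<in> obj_gen"
    unfolding obj_gen_def
    using blocks_dhom_fibre_lengths[OF f] singletons_concat_dh_aut[OF f] y by auto
  then show ?thesis
    by (simp add: a normal_obj_HF[OF f y] dh_comp_eq_HF HF_blocks_singletons eval_obj_def)
qed

lemma mor_gen_normal_mor:
  assumes "a \<in> IFX_mor"
  shows "(a, normal_mor (eval_mor a)) \<in> mor_gen"
proof -
  obtain m f g y where a: "a = (m, f, g, y)" and f: "f \<in> dhom m (length f)" and y: "y \<in> Xpow m"
    and g: "g \<in> dhom (length f) (length g)"
    using assms by (auto simp: IFX_mor_def)
  let ?c = "blocks 0 (map length f)" and ?\<sigma> = "singletons (concat f)"
  have "((m, dh_comp ?c ?\<sigma>, g, y), (m, ?c, g, HF ?\<sigma> y)) \<in> mor_gen"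
    unfolding mor_gen_def
    using blocks_dhom_fibre_lengths[OF f] singletons_concat_dh_aut[OF f] y g by auto
  moreover have "normal_mor (g, HF f y) = (m, ?c, g, HF ?\<sigma> y)"
    using normal_obj_HF[OF f y] by (simp add: normal_mor_def normal_obj_def)
  ultimately show ?thesis
    by (simp add: a dh_comp_eq_HF HF_blocks_singletons eval_mor_def)
qed

interpretation obj: complete_invariant obj_rel IFX_obj eval_obj normal_obj
proof
  show "equiv UNIV obj_rel"
    unfolding obj_rel_def by (rule equiv_rtrancl_Un_converse)
  show "eval_obj a = eval_obj b" if "(a, b) \<in> obj_rel" for a b
    using eval_obj_obj_gen that unfolding obj_rel_def by (rule rtrancl_Un_converse_invariant)
  show "(a, normal_obj (eval_obj a)) \<in> obj_rel" if "a \<in> IFX_obj" for a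
    using obj_gen_normal_obj[OF that] unfolding obj_rel_def by blast
qed

interpretation mor: complete_invariant mor_rel IFX_mor eval_mor normal_mor
proof
  show "equiv UNIV mor_rel"
    unfolding mor_rel_def by (rule equiv_rtrancl_Un_converse)
  show "eval_mor a = eval_mor b" if "(a, b) \<in> mor_rel" for a b
    using eval_mor_mor_gen that unfolding mor_rel_def by (rule rtrancl_Un_converse_invariant)
  show "(a, normal_mor (eval_mor a)) \<in> mor_rel" if "a \<in> IFX_mor" for a
    using mor_gen_normal_mor[OF that] unfolding mor_rel_def by blast
qed

lemma E_obj_bij: "bij_betw E_obj (Obj IFX_quot) (Obj TF)"
proof -
  have "bij_betw (\<lambda>X. eval_obj (SOME x. x \<in> X)) (IFX_obj // obj_rel) UNIV"
    using normal_obj_IFX_obj eval_normal_obj by (intro obj.bij_betw_quotient) auto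
  then show ?thesis
    by (simp add: IFX_quot_def TF_def E_obj_def[abs_def])
qed

lemma E_mor_bij: "bij_betw E_mor (Mor IFX_quot) (Mor TF)"
proof -
  have "bij_betw (\<lambda>X. eval_mor (SOME x. x \<in> X)) (IFX_mor // mor_rel) (Mor TF)"
    using eval_mor_Mor_TF normal_mor_IFX_mor eval_normal_mor by (intro mor.bij_betw_quotient) auto
  then show ?thesis
    by (simp add: IFX_quot_def E_mor_def[abs_def])
qed

lemma eval_obj_IFX_dom: "eval_obj (IFX_dom a) = Dom TF (eval_mor a)"
  by (cases a) (simp add: IFX_dom_def eval_obj_def eval_mor_def TF_def)

lemma eval_obj_IFX_cod: "a \<in> IFX_mor \<Longrightarrow> eval_obj (IFX_cod a) = Cod TF (eval_mor a)"
  by (auto simp: IFX_mor_def IFX_cod_def eval_obj_def eval_mor_def TF_def dh_comp_eq_HF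
      intro!: HF_HF dest: dhom_index_less)

lemma eval_mor_IFX_id: "eval_mor (IFX_id x) = Idm TF (eval_obj x)"
  by (cases x) (simp add: IFX_id_def eval_mor_def eval_obj_def TF_def)

lemma eval_mor_IFX_comp: "eval_mor (IFX_comp b a) = Comp TF (eval_mor b) (eval_mor a)"
  by (cases a, cases b) (simp add: IFX_comp_def eval_mor_def TF_def)

lemma Mor_IFX_quot: "Mor IFX_quot = IFX_mor // mor_rel"
  by (simp add: IFX_quot_def)

lemma mor_gen_subset_IFX_mor: "mor_gen \<subseteq> IFX_mor \<times> IFX_mor"
proof -
  have "dh_comp f h \<in> dhom m (length f)" if "f \<in> dhom m (length f)" "h \<in> dh_aut m" for f h m
    using that by (blast intro: dh_comp_dhom dh_aut_dhom)
  then show ?thesis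
    by (auto simp: mor_gen_def IFX_mor_def dh_comp_eq_HF HF_dh_aut_Xpow)
qed

lemma some_in_Mor_IFX_quot: "A \<in> Mor IFX_quot \<Longrightarrow> (SOME a. a \<in> A) \<in> A \<inter> IFX_mor"
  using mor.some_in_quotient rtrancl_Un_converse_class_subset[OF mor_gen_subset_IFX_mor]
  by (auto simp: IFX_quot_def mor_rel_def)

lemma E_obj_Dom: "E_obj (Dom IFX_quot A) = Dom TF (E_mor A)"
  unfolding E_obj_def E_mor_def IFX_quot_def cat.simps obj.value_some_class
  by (rule eval_obj_IFX_dom)

lemma E_obj_Cod: "A \<in> Mor IFX_quot \<Longrightarrow> E_obj (Cod IFX_quot A) = Cod TF (E_mor A)"
  unfolding E_obj_def E_mor_def IFX_quot_def cat.simps obj.value_some_class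
  using some_in_Mor_IFX_quot[unfolded IFX_quot_def] by (simp add: eval_obj_IFX_cod)

lemma E_mor_Idm: "E_mor (Idm IFX_quot X) = Idm TF (E_obj X)"
  unfolding E_obj_def E_mor_def IFX_quot_def cat.simps mor.value_some_class
  by (rule eval_mor_IFX_id)

(* If (m, f, g, y) represents A and the representative of B carries the arrow k, then
   (m, g f, k, y) has the required domain and evaluates like the representative of B. *)
lemma composable_representative:
  assumes A: "A \<in> Mor IFX_quot" and B: "B \<in> Mor IFX_quot" and AB: "Cod IFX_quot A = Dom IFX_quot B"
  shows "\<exists>b \<in> B. IFX_dom b = IFX_cod (SOME a. a \<in> A)"
proof -
  obtain m f g y where a: "(SOME a. a \<in> A) = (m, f, g, y)" and "(m, f, g, y) \<in> IFX_mor"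
    using some_in_Mor_IFX_quot[OF A] by (metis IntD2 prod_cases4)
  then have f: "f \<in> dhom m (length f)" and g: "g \<in> dhom (length f) (length g)" and y: "y \<in> Xpow m"
    by (auto simp: IFX_mor_def)
  obtain m' f' k y' where b': "(SOME b. b \<in> B) = (m', f', k, y')" and "(m', f', k, y') \<in> IFX_mor"
    using some_in_Mor_IFX_quot[OF B] by (metis IntD2 prod_cases4)
  then have k: "k \<in> dhom (length f') (length k)"
    by (auto simp: IFX_mor_def)
  have "Cod TF (E_mor A) = Dom TF (E_mor B)"
    using AB E_obj_Cod[OF A] E_obj_Dom by metis
  then have HF_eq: "HF g (HF f y) = HF f' y'"
    by (simp add: E_mor_def a b' eval_mor_def TF_def)
  define b where "b = (m, dh_comp g f, k, y)"
  have "length g = length f'"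
    using arg_cong[OF HF_eq, of length] by simp
  then have "b \<in> IFX_mor"
    using dh_comp_dhom[OF f g] k y by (simp add: b_def IFX_mor_def dh_comp_eq_HF)
  moreover have "eval_mor b = eval_mor (SOME b. b \<in> B)"
    using eval_obj_IFX_cod[OF \<open>(m, f, g, y) \<in> IFX_mor\<close>]
    by (simp add: b_def b' eval_mor_def eval_obj_def IFX_cod_def TF_def HF_eq)
  ultimately have related: "(SOME b. b \<in> B, b) \<in> mor_rel"
    using some_in_Mor_IFX_quot[OF B] by (auto intro: mor.related_if_same_value)
  have "b \<in> B"
    using mor.in_quotient_UNIV[OF B[unfolded Mor_IFX_quot]] IntD1[OF some_in_Mor_IFX_quot[OF B]]
    by (rule in_quotient_imp_closed[OF mor.equiv _ _ related])
  moreover have "IFX_dom b = IFX_cod (SOME a. a \<in> A)"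
    by (simp add: a b_def IFX_dom_def IFX_cod_def)
  ultimately show ?thesis
    by blast
qed

lemma E_mor_Comp:
  assumes A: "A \<in> Mor IFX_quot" and B: "B \<in> Mor IFX_quot" and AB: "Cod IFX_quot A = Dom IFX_quot B"
  shows "E_mor (Comp IFX_quot B A) = Comp TF (E_mor B) (E_mor A)"
proof -
  define a where "a = (SOME a. a \<in> A)"
  define b where "b = (SOME b. b \<in> B \<and> IFX_dom b = IFX_cod a)"
  have "\<exists>b. b \<in> B \<and> IFX_dom b = IFX_cod a"
    using composable_representative[OF assms] unfolding a_def by blast
  then have "b \<in> B \<and> IFX_dom b = IFX_cod a"
    unfolding b_def by (rule someI_ex)
  then have EB: "E_mor B = eval_mor b"
    unfolding E_mor_def using mor.value_some_in_quotient[OF B[unfolded Mor_IFX_quot]] by blast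
  have "Comp IFX_quot B A = mor_rel `` {IFX_comp b a}"
    by (simp add: IFX_quot_def a_def b_def Let_def)
  then have "E_mor (Comp IFX_quot B A) = eval_mor (IFX_comp b a)"
    unfolding E_mor_def by (simp only: mor.value_some_class)
  also have "\<dots> = Comp TF (E_mor B) (E_mor A)"
    unfolding eval_mor_IFX_comp EB by (simp add: E_mor_def a_def)
  finally show ?thesis .
qed

theorem lemma3p7:
  shows "(\<forall>(a, b) \<in> obj_rel. eval_obj a = eval_obj b)
       \<and> (\<forall>(a, b) \<in> mor_rel. eval_mor a = eval_mor b)
       \<and> cat_iso IFX_quot TF E_obj E_mor"
proof (intro conjI)
  show "\<forall>(a, b) \<in> obj_rel. eval_obj a = eval_obj b"
    using obj.invariant by blast
  show "\<forall>(a, b) \<in> mor_rel. eval_mor a = eval_mor b"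
    using mor.invariant by blast
  show "cat_iso IFX_quot TF E_obj E_mor"
    unfolding cat_iso_def
    by (simp add: E_obj_bij E_mor_bij E_obj_Dom E_obj_Cod E_mor_Idm E_mor_Comp)
qed

end
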